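(* Let $G\subseteq W(\mathsf D_n)$ be a finite group acting on $L=\bigoplus_{i=-1}^n\mathbb Z l_i$ via $\Phi$, and for $i\in\{-1,\dots,n\}$ let $f_i:G\to L$, $f_i(g)=\Phi(g)l_i-l_i$. Suppose $I\subseteq\{-1,1,\dots,n\}$ is such that $\xi=\frac12\sum_{i\in I}f_i$ is an $L$-valued $1$-cocycle with $0\neq[\xi]\in\mathrm H^1(G,L)$. Let $g\in G$ and let $\beta$ be a signed permutation cycle of $g$ whose underlying cycle is $(a_1\ a_2\ \dots\ a_w)$. If $a_1\in I$, then $\{a_1,\dots,a_w\}\subseteq I$.
   Context: $W(\mathsf B_n)$ is the group of signed permutations of the symbols $j^\pm$ ($j=1,\dots,n$), generated by $\mathfrak S_n$ and the involutions $c_j$ exchanging $j^+,j^-$; each element is $c_{j_1}\cdots c_{j_t}\tau$ with distinct $j_i$, $\tau\in\mathfrak S_n$; $\sigma(c_{j_1}\cdots c_{j_t}\tau)=(-1)^t$ and $W(\mathsf D_n)=\ker\sigma$. Writing $\tau$ as a product of disjoint cycles $\gamma$ (fixed points included as cycles of length one), the signed permutation cycle attached to $\gamma$ is $\beta_\gamma=(\prod_{j_i\in\mathrm{supp}\,\gamma}c_{j_i})\gamma$, and $g=\prod_\gamma\beta_\gamma$; the underlying cycle of $\beta_\gamma$ is $\gamma$. For $g=c_{j_1}\cdots c_{j_t}\tau\in W(\mathsf D_n)$ let $s(i)=-1$ if $i\in\{j_1,\dots,j_t\}$, else $s(i)=1$; $\Phi(g)$ is defined by $\Phi(g)l_0=l_0$,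 $\Phi(g)l_{-1}=l_{-1}+\frac t2l_0-\sum_{s(i)=-1}l_i$, and for $v\ge1$, $u=\tau^{-1}(v)$: $\Phi(g)l_v=l_u$ if $s(u)=1$, $\Phi(g)l_v=l_0-l_u$ if $s(u)=-1$. *)

theory Defs
  imports Main
begin

text \<open>Symbols j^+ and j^- (j = 1..n) are encoded as the integers j and -j.
  The product g*h means: first g, then h (so it is the function h o g);
  with this convention Phi below is a homomorphism.\<close>

definition symbols :: "nat \<Rightarrow> int set" where
  "symbols n = {-int n..int n} - {0}"

definition signed_perm :: "nat \<Rightarrow> (int \<Rightarrow> int) \<Rightarrow> bool" where
  "signed_perm n g \<longleftrightarrow> bij_betw g (symbols n) (symbols n)
     \<and> (\<forall>x. g (- x) = - g x) \<and> (\<forall>x. x \<notin> symbols n \<longrightarrow> g x = x)"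

definition sp_mult :: "(int \<Rightarrow> int) \<Rightarrow> (int \<Rightarrow> int) \<Rightarrow> (int \<Rightarrow> int)" where
  "sp_mult g h = h \<circ> g"

text \<open>the set {j_1,...,j_t} of indices carrying a c_j in g = c_{j_1}...c_{j_t} tau\<close>
definition neg_set :: "nat \<Rightarrow> (int \<Rightarrow> int) \<Rightarrow> int set" where
  "neg_set n g = {j \<in> {1..int n}. g j < 0}"

definition W_D :: "nat \<Rightarrow> (int \<Rightarrow> int) set" where
  "W_D n = {g. signed_perm n g \<and> even (card (neg_set n g))}"

definition und :: "(int \<Rightarrow> int) \<Rightarrow> int \<Rightarrow> int" where
  "und g j = \<bar>g j\<bar>"

definition cycle_support :: "(int \<Rightarrow> int) \<Rightarrow> int \<Rightarrow> int set" where
  "cycle_support g a = {(und g ^^ k) a | k. True}"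

text \<open>Lattice L = direct sum of Z l_i, i = -1..n: coefficient functions supported on {-1..n}.\<close>
definition lat :: "nat \<Rightarrow> (int \<Rightarrow> int) set" where
  "lat n = {x. \<forall>k. k \<notin> {-1..int n} \<longrightarrow> x k = 0}"

definition bvec :: "int \<Rightarrow> int \<Rightarrow> int" where
  "bvec i = (\<lambda>k. if k = i then 1 else 0)"

definition Phi_basis :: "nat \<Rightarrow> (int \<Rightarrow> int) \<Rightarrow> int \<Rightarrow> (int \<Rightarrow> int)" where
  "Phi_basis n g v =
     (if v = 0 then bvec 0
      else if v = -1 then
        (\<lambda>k. bvec (-1) k + int (card (neg_set n g)) div 2 * bvec 0 k
              - (\<Sum>i\<in>neg_set n g. bvec i k))
      else (let u = (THE u. u \<in> {1..int n} \<and> und g u = v) in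
            if g u > 0 then bvec u else (\<lambda>k. bvec 0 k - bvec u k)))"

definition Phi :: "nat \<Rightarrow> (int \<Rightarrow> int) \<Rightarrow> (int \<Rightarrow> int) \<Rightarrow> (int \<Rightarrow> int)" where
  "Phi n g x = (\<lambda>k. \<Sum>v\<in>{-1..int n}. x v * Phi_basis n g v k)"

definition fcoc :: "nat \<Rightarrow> int \<Rightarrow> (int \<Rightarrow> int) \<Rightarrow> (int \<Rightarrow> int)" where
  "fcoc n i g = (\<lambda>k. Phi n g (bvec i) k - bvec i k)"

end

theory Submission
  imports Defs
begin

(* Write J = I - {-1} and |h| for the underlying permutation k |-> |h(k)|. For k >= 1 the
   l_k-coefficient of sum_{i in J} f_i(h) is +-[|h(k)| in J] - [k in J], and that of f_{-1}(h)
   is -[h(k) < 0].  If -1 is not in I, integrality of xi(g) at the coordinates k in J says that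
   J is closed under |g|, so it contains the cycle of a.  If -1 is in I, integrality at all
   k >= 1 says that |h(k)| in J iff (k in J iff h(k) > 0); counting negative signs then shows
   that the l_0-coefficients agree as well, so sum_{i in J} f_i = f_{-1} and xi = f_{-1} is the
   coboundary of l_{-1}, contradicting [xi] <> 0. *)

lemma signed_perm_in_symbols:
  assumes "signed_perm n h" and "u \<in> {1..int n}"
  shows "h u \<in> symbols n"
proof -
  have "u \<in> symbols n"
    using assms(2) unfolding symbols_def by auto
  then show ?thesis
    using assms(1) bij_betwE unfolding signed_perm_def by blast
qed

lemma signed_perm_nonzero:
  assumes "signed_perm n h" and "u \<in> {1..int n}"
  shows "h u \<noteq> 0"
  using signed_perm_in_symbols[OF assms] unfolding symbols_def by auto

lemma und_in_range:
  assumes "signed_perm n h" and "u \<in> {1..int n}"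
  shows "und h u \<in> {1..int n}"
  using signed_perm_in_symbols[OF assms] unfolding symbols_def und_def by auto

lemma inj_on_und:
  assumes sp: "signed_perm n h"
  shows "inj_on (und h) {1..int n}"
proof (rule inj_onI)
  fix u v assume u: "u \<in> {1..int n}" and v: "v \<in> {1..int n}" and eq: "und h u = und h v"
  have inj: "inj_on h (symbols n)" and odd: "h (- v) = - h v"
    using sp unfolding signed_perm_def bij_betw_def by auto
  have sym: "u \<in> symbols n" "v \<in> symbols n" "- v \<in> symbols n"
    using u v unfolding symbols_def by auto
  from eq odd have "h u = h v \<or> h u = h (- v)"
    unfolding und_def by auto
  then have "u = v \<or> u = - v"
    using inj sym by (auto dest: inj_onD)
  then show "u = v"
    using u v by auto
qed

lemma bij_betw_und:
  assumes "signed_perm n h"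
  shows "bij_betw (und h) {1..int n} {1..int n}"
  using assms inj_on_und und_in_range
  by (metis endo_inj_surj finite_atLeastAtMost_int image_subsetI bij_betw_def)

lemma Phi_basis_und:
  assumes sp: "signed_perm n h" and u: "u \<in> {1..int n}"
  shows "Phi_basis n h (und h u) =
    (if 0 < h u then bvec u else (\<lambda>k. bvec 0 k - bvec u k))"
proof -
  have "(THE u'. u' \<in> {1..int n} \<and> und h u' = und h u) = u"
    using u inj_on_und[OF sp] by (intro the_equality) (auto dest: inj_onD)
  then show ?thesis
    using und_in_range[OF sp u] unfolding Phi_basis_def Let_def by auto
qed

lemma Phi_bvec:
  assumes "i \<in> {-1..int n}"
  shows "Phi n h (bvec i) = Phi_basis n h i"
proof
  fix k
  have "Phi n h (bvec i) k = (\<Sum>v\<in>{-1..int n}. if v = i then Phi_basis n h v k else 0)"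
    unfolding Phi_def bvec_def by (rule sum.cong) auto
  then show "Phi n h (bvec i) k = Phi_basis n h i k"
    using assms by simp
qed

lemma fcoc_eq_Phi_basis:
  assumes "i \<in> {-1..int n}"
  shows "fcoc n i h k = Phi_basis n h i k - bvec i k"
  unfolding fcoc_def Phi_bvec[OF assms] ..

lemma neg_set_subset: "neg_set n h \<subseteq> {1..int n}"
  unfolding neg_set_def by auto

lemma fcoc_minus_one:
  "fcoc n (-1) h k =
     (if k = 0 then int (card (neg_set n h)) div 2 else 0) - (if k \<in> neg_set n h then 1 else 0)"
proof -
  have "finite (neg_set n h)" and "0 \<notin> neg_set n h"
    using finite_subset[OF neg_set_subset] neg_set_subset[of n h] by auto
  moreover have "fcoc n (-1) h k = Phi_basis n h (-1) k - bvec (-1) k"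
    by (rule fcoc_eq_Phi_basis) simp
  ultimately show ?thesis
    unfolding Phi_basis_def by (auto simp: bvec_def)
qed

lemma bij_betw_und_preimage:
  assumes sp: "signed_perm n h" and J: "J \<subseteq> {1..int n}"
  shows "bij_betw (und h) {u \<in> {1..int n}. und h u \<in> J} J"
proof -
  have "und h ` {u \<in> {1..int n}. und h u \<in> J} = J"
  proof
    show "J \<subseteq> und h ` {u \<in> {1..int n}. und h u \<in> J}"
    proof
      fix i assume "i \<in> J"
      then obtain u where "u \<in> {1..int n}" "i = und h u"
        using J bij_betw_und[OF sp] unfolding bij_betw_def by blast
      with \<open>i \<in> J\<close> show "i \<in> und h ` {u \<in> {1..int n}. und h u \<in> J}" by blast
    qed
  qed blast
  then show ?thesis
    using bij_betw_und[OF sp] by (rule bij_betw_subset[rotated 2]) blast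
qed

lemma sum_Phi_basis_reindex:
  assumes sp: "signed_perm n h" and J: "J \<subseteq> {1..int n}"
  shows "(\<Sum>i\<in>J. Phi_basis n h i k) =
    (\<Sum>u\<in>{u \<in> {1..int n}. und h u \<in> J}. Phi_basis n h (und h u) k)"
  using bij_betw_und_preimage[OF sp J] by (rule sum.reindex_bij_betw[symmetric])

lemma sum_fcoc:
  assumes "J \<subseteq> {1..int n}"
  shows "(\<Sum>i\<in>J. fcoc n i h k) = (\<Sum>i\<in>J. Phi_basis n h i k) - (if k \<in> J then 1 else 0)"
proof -
  have "finite J"
    using assms finite_subset by blast
  moreover have "(\<Sum>i\<in>J. fcoc n i h k) = (\<Sum>i\<in>J. Phi_basis n h i k) - (\<Sum>i\<in>J. bvec i k)"
    unfolding sum_subtractf[symmetric] using assms by (intro sum.cong) (auto simp: fcoc_eq_Phi_basis)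
  ultimately show ?thesis
    unfolding bvec_def by simp
qed

lemma sum_Phi_basis_pos:
  assumes sp: "signed_perm n h" and J: "J \<subseteq> {1..int n}" and k: "k \<in> {1..int n}"
  shows "(\<Sum>i\<in>J. Phi_basis n h i k) = (if und h k \<in> J then (if 0 < h k then 1 else -1) else 0)"
proof -
  have "(\<Sum>i\<in>J. Phi_basis n h i k) =
      (\<Sum>u\<in>{u \<in> {1..int n}. und h u \<in> J}. if u = k then (if 0 < h k then 1 else -1) else 0)"
    unfolding sum_Phi_basis_reindex[OF sp J]
    using k by (intro sum.cong) (auto simp: Phi_basis_und[OF sp] bvec_def)
  also have "\<dots> = (if und h k \<in> J then (if 0 < h k then 1 else -1) else 0)"
    using k by (subst sum.delta) (auto simp del: atLeastAtMost_iff)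
  finally show ?thesis .
qed

lemma sum_Phi_basis_zero:
  assumes sp: "signed_perm n h" and J: "J \<subseteq> {1..int n}"
  shows "(\<Sum>i\<in>J. Phi_basis n h i 0) = int (card {u \<in> {1..int n}. und h u \<in> J \<and> h u < 0})"
proof -
  have "(\<Sum>i\<in>J. Phi_basis n h i 0) =
      (\<Sum>u\<in>{u \<in> {1..int n}. und h u \<in> J}. if h u < 0 then 1 else 0)"
    unfolding sum_Phi_basis_reindex[OF sp J]
    using signed_perm_nonzero[OF sp] by (intro sum.cong) (auto simp: Phi_basis_und[OF sp] bvec_def)
  also have "\<dots> = (\<Sum>u\<in>{u \<in> {1..int n}. und h u \<in> J \<and> h u < 0}. 1)"
    by (subst sum.inter_filter[symmetric]) (auto simp del: atLeastAtMost_iff intro: sum.cong)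
  finally show ?thesis
    by simp
qed

lemma sum_Phi_basis_outside:
  assumes sp: "signed_perm n h" and J: "J \<subseteq> {1..int n}" and k: "k \<notin> {0..int n}"
  shows "(\<Sum>i\<in>J. Phi_basis n h i k) = 0"
  unfolding sum_Phi_basis_reindex[OF sp J]
  using k by (intro sum.neutral) (auto simp: Phi_basis_und[OF sp] bvec_def)

lemma even_sum_fcoc_iff:
  assumes sp: "signed_perm n h" and J: "J \<subseteq> {1..int n}" and k: "k \<in> {1..int n}"
  shows "even (\<Sum>i\<in>J. fcoc n i h k) \<longleftrightarrow> (und h k \<in> J \<longleftrightarrow> k \<in> J)"
  unfolding sum_fcoc[OF J] sum_Phi_basis_pos[OF sp J k] by auto

lemma even_sum_fcoc_add_fcoc_minus_one_iff:
  assumes sp: "signed_perm n h" and J: "J \<subseteq> {1..int n}" and k: "k \<in> {1..int n}"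
  shows "even ((\<Sum>i\<in>J. fcoc n i h k) + fcoc n (-1) h k) \<longleftrightarrow>
    (und h k \<in> J \<longleftrightarrow> (k \<in> J \<longleftrightarrow> 0 < h k))"
  unfolding sum_fcoc[OF J] sum_Phi_basis_pos[OF sp J k] fcoc_minus_one neg_set_def
  using k signed_perm_nonzero[OF sp k] by auto

lemma card_neg_set_eq_double:
  assumes sp: "signed_perm n h" and J: "J \<subseteq> {1..int n}"
    and twisted: "\<And>u. u \<in> {1..int n} \<Longrightarrow> und h u \<in> J \<longleftrightarrow> (u \<in> J \<longleftrightarrow> 0 < h u)"
  shows "card (neg_set n h) = 2 * card {u \<in> {1..int n}. und h u \<in> J \<and> h u < 0}"
proof -
  let ?N = "neg_set n h"
  have fin: "finite J" "finite ?N"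
    using finite_subset[OF J] finite_subset[OF neg_set_subset] by auto
  have "{u \<in> {1..int n}. und h u \<in> J \<and> h u < 0} = ?N - J"
    using twisted unfolding neg_set_def by auto
  moreover have "{u \<in> {1..int n}. und h u \<in> J} = (?N - J) \<union> (J - ?N)"
    using J twisted signed_perm_nonzero[OF sp] unfolding neg_set_def by force
  then have "card J = card (?N - J) + card (J - ?N)"
    using bij_betw_same_card[OF bij_betw_und_preimage[OF sp J]]
      card_Un_disjoint[of "?N - J" "J - ?N"] fin
    by auto
  moreover have "card J = card (?N \<inter> J) + card (J - ?N)"
    using card_Int_Diff[OF fin(1), of ?N] by (simp add: Int_commute)
  ultimately show ?thesis
    using card_Int_Diff[OF fin(2), of J] by simp
qed

lemma sum_fcoc_eq_fcoc_minus_one: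
  assumes sp: "signed_perm n h" and J: "J \<subseteq> {1..int n}"
    and even: "\<And>u. u \<in> {1..int n} \<Longrightarrow> even ((\<Sum>i\<in>J. fcoc n i h u) + fcoc n (-1) h u)"
  shows "(\<Sum>i\<in>J. fcoc n i h k) = fcoc n (-1) h k"
proof -
  have twisted: "und h u \<in> J \<longleftrightarrow> (u \<in> J \<longleftrightarrow> 0 < h u)" if "u \<in> {1..int n}" for u
    using even[OF that] even_sum_fcoc_add_fcoc_minus_one_iff[OF sp J that] by blast
  consider "k \<in> {1..int n}" | "k = 0" | "k \<notin> {0..int n}"
    by fastforce
  then show ?thesis
  proof cases
    case 1
    then show ?thesis
      unfolding sum_fcoc[OF J] sum_Phi_basis_pos[OF sp J 1] fcoc_minus_one neg_set_def
      using twisted[OF 1] signed_perm_nonzero[OF sp 1] by auto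
  next
    case 2
    have "fcoc n (-1) h 0 = int (card (neg_set n h)) div 2"
      using neg_set_subset[of n h] by (auto simp: fcoc_minus_one)
    also have "\<dots> = int (card {u \<in> {1..int n}. und h u \<in> J \<and> h u < 0})"
      using card_neg_set_eq_double[OF sp J] twisted by simp
    also have "\<dots> = (\<Sum>i\<in>J. fcoc n i h 0)"
      using J by (auto simp: sum_fcoc[OF J] sum_Phi_basis_zero[OF sp J])
    finally show ?thesis
      using 2 by simp
  next
    case 3
    then show ?thesis
      using J unfolding sum_fcoc[OF J] sum_Phi_basis_outside[OF sp J 3] fcoc_minus_one
      by (auto simp: neg_set_def)
  qed
qed

lemma cycle_support_subset:
  assumes "a \<in> J" and closed: "\<And>b. b \<in> J \<Longrightarrow> und g b \<in> J"
  shows "cycle_support g a \<subseteq> J"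
proof -
  have "(und g ^^ m) a \<in> J" for m
    using assms by (induction m) auto
  then show ?thesis
    unfolding cycle_support_def by blast
qed

theorem lemma3p3:
  fixes n :: nat and G :: "(int \<Rightarrow> int) set" and I :: "int set"
    and g :: "int \<Rightarrow> int" and a :: int
  assumes G_sub: "G \<subseteq> W_D n"
    and G_fin: "finite G"
    and G_id: "id \<in> G"
    and G_mult: "\<And>g h. g \<in> G \<Longrightarrow> h \<in> G \<Longrightarrow> sp_mult g h \<in> G"
    and G_inv: "\<And>g. g \<in> G \<Longrightarrow> inv g \<in> G"
    and I_sub: "I \<subseteq> {-1} \<union> {1..int n}"
    and L_valued: "\<And>h k. h \<in> G \<Longrightarrow> even (\<Sum>i\<in>I. fcoc n i h k)"
    and cocycle: "\<And>h1 h2. h1 \<in> G \<Longrightarrow> h2 \<in> G \<Longrightarrow>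
        (\<lambda>k. (\<Sum>i\<in>I. fcoc n i (sp_mult h1 h2) k) div 2) =
        (\<lambda>k. (\<Sum>i\<in>I. fcoc n i h1 k) div 2
              + Phi n h1 (\<lambda>k'. (\<Sum>i\<in>I. fcoc n i h2 k') div 2) k)"
    and nontrivial: "\<not> (\<exists>x\<in>lat n. \<forall>h\<in>G.
        (\<lambda>k. (\<Sum>i\<in>I. fcoc n i h k) div 2) = (\<lambda>k. Phi n h x k - x k))"
    and g_in: "g \<in> G"
    and a_range: "a \<in> {1..int n}"
    and a_in: "a \<in> I"
  shows "cycle_support g a \<subseteq> I"
proof -
  define J where "J = I - {-1}"
  have J: "J \<subseteq> {1..int n}"
    using I_sub unfolding J_def by auto
  have sp: "signed_perm n h" if "h \<in> G" for h
    using G_sub that unfolding W_D_def by auto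
  have sum_I: "(\<Sum>i\<in>I. fcoc n i h k) =
      (\<Sum>i\<in>J. fcoc n i h k) + (if -1 \<in> I then fcoc n (-1) h k else 0)" for h k
    using finite_subset[OF I_sub] unfolding J_def by (simp add: sum_diff1)
  show ?thesis
  proof (cases "-1 \<in> I")
    case True
    have "(\<lambda>k. (\<Sum>i\<in>I. fcoc n i h k) div 2) = (\<lambda>k. Phi n h (bvec (-1)) k - bvec (-1) k)"
      if h: "h \<in> G" for h
    proof
      fix k
      have "(\<Sum>i\<in>J. fcoc n i h k) = fcoc n (-1) h k"
        using sum_fcoc_eq_fcoc_minus_one[OF sp[OF h] J] L_valued[OF h] sum_I True by simp
      then show "(\<Sum>i\<in>I. fcoc n i h k) div 2 = Phi n h (bvec (-1)) k - bvec (-1) k"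
        using sum_I True unfolding fcoc_def by simp
    qed
    moreover have "bvec (-1) \<in> lat n"
      unfolding lat_def bvec_def by auto
    ultimately show ?thesis
      using nontrivial by blast
  next
    case False
    have "und g b \<in> J" if "b \<in> J" for b
      using L_valued[OF g_in, of b] sum_I False even_sum_fcoc_iff[OF sp[OF g_in] J] that J
      by auto
    moreover have "a \<in> J"
      using a_in a_range unfolding J_def by auto
    ultimately show ?thesis
      using cycle_support_subset[of a J g] unfolding J_def by blast
  qed
qed

end
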